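(* Assume the Hamiltonian is thermodynamically stable. Then there exists a positive function $c(\beta)$, independent of $\Lambda$, such that for every finite box $\Lambda$ $$V(\mathcal{A})=\mathrm{Av}(\mathcal{A}^2)-\mathrm{Av}(\mathcal{A})^2\le c(\beta)\,|\Lambda|,$$ where $\mathcal{A}=\mathcal{A}(\beta)=\ln\mathcal{Z}(\beta)$.
   Context: For each finite $d$-dimensional parallelepiped $\Lambda\subset\mathbb{Z}^d$ let $\Sigma_\Lambda=\{-1,1\}^\Lambda$, and for $X\subset\Lambda$ let $\sigma_X=\prod_{i\in X}\sigma_i$ (with $\sigma_\emptyset=0$). Let $\{J_X\}$ be independent centered Gaussian random variables with variances $\mathrm{Av}(J_X^2)=\Delta_X^2$, translation invariant, where $\mathrm{Av}$ denotes expectation over the $J$'s. The Hamiltonian is $H_\Lambda(\sigma)=-\sum_{X\subset\Lambda}J_X\sigma_X$ and $\mathcal{Z}(\beta)=\sum_{\sigma\in\Sigma_\Lambda}e^{-\beta H_\Lambda(\sigma)}$. The Hamiltonian is thermodynamically stable if there is $\bar c<\infty$ with $\sup_{\Lambda}\frac{1}{|\Lambda|}\sum_{X\subset\Lambda}\Delta_X^2\le\bar c$. *)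

theory Defs
  imports "HOL-Probability.Probability"
begin

(* Sites are points of Z^d, modelled as int ^ 'd for a finite index type 'd (d = CARD('d)). *)

definition box_Zd :: "int ^ 'd \<Rightarrow> int ^ 'd \<Rightarrow> (int ^ 'd) set" where
  "box_Zd a b = {x. \<forall>i. a $ i \<le> x $ i \<and> x $ i \<le> b $ i}"

definition is_box :: "(int ^ 'd::finite) set \<Rightarrow> bool" where
  "is_box \<Lambda> \<longleftrightarrow> (\<exists>a b. (\<forall>i. a $ i \<le> b $ i) \<and> \<Lambda> = box_Zd a b)"

definition configs :: "'a set \<Rightarrow> ('a \<Rightarrow> real) set" where
  "configs \<Lambda> = (\<Lambda> \<rightarrow>\<^sub>E {-1, 1})"

(* sigma_X = prod_{i in X} sigma_i, with the paper's convention sigma_{emptyset} = 0 *)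
definition sigma_prod :: "('a \<Rightarrow> real) \<Rightarrow> 'a set \<Rightarrow> real" where
  "sigma_prod \<sigma> X = (if X = {} then 0 else (\<Prod>i\<in>X. \<sigma> i))"

definition hamiltonian :: "'a set \<Rightarrow> ('a set \<Rightarrow> real) \<Rightarrow> ('a \<Rightarrow> real) \<Rightarrow> real" where
  "hamiltonian \<Lambda> J \<sigma> = - (\<Sum>X\<in>Pow \<Lambda>. J X * sigma_prod \<sigma> X)"

definition partition_fn :: "'a set \<Rightarrow> real \<Rightarrow> ('a set \<Rightarrow> real) \<Rightarrow> real" where
  "partition_fn \<Lambda> \<beta> J = (\<Sum>\<sigma>\<in>configs \<Lambda>. exp (- \<beta> * hamiltonian \<Lambda> J \<sigma>))"

definition free_energy :: "'a set \<Rightarrow> real \<Rightarrow> ('a set \<Rightarrow> real) \<Rightarrow> real" where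
  "free_energy \<Lambda> \<beta> J = ln (partition_fn \<Lambda> \<beta> J)"

(* Av: expectation over independent centred Gaussians J_X (X subset Lambda) with
   variance Delta_X^2, realised as J_X = Delta_X * g_X with g_X i.i.d. standard normal. *)
definition gauss_space :: "'a set \<Rightarrow> ('a set \<Rightarrow> real) measure" where
  "gauss_space \<Lambda> = PiM (Pow \<Lambda>) (\<lambda>_. std_normal_distribution)"

definition Av :: "'a set \<Rightarrow> ('a set \<Rightarrow> real) \<Rightarrow> (('a set \<Rightarrow> real) \<Rightarrow> real) \<Rightarrow> real" where
  "Av \<Lambda> \<Delta> F = (\<integral>g. F (\<lambda>X. \<Delta> X * g X) \<partial>gauss_space \<Lambda>)"

definition Var_Av :: "'a set \<Rightarrow> ('a set \<Rightarrow> real) \<Rightarrow> (('a set \<Rightarrow> real) \<Rightarrow> real) \<Rightarrow> real" where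
  "Var_Av \<Lambda> \<Delta> F = Av \<Lambda> \<Delta> (\<lambda>J. (F J)\<^sup>2) - (Av \<Lambda> \<Delta> F)\<^sup>2"

definition transl_inv :: "((int ^ 'd) set \<Rightarrow> real) \<Rightarrow> bool" where
  "transl_inv \<Delta> \<longleftrightarrow> (\<forall>X a. \<Delta> ((\<lambda>x. x + a) ` X) = \<Delta> X)"

definition thermo_stable :: "((int ^ 'd::finite) set \<Rightarrow> real) \<Rightarrow> bool" where
  "thermo_stable \<Delta> \<longleftrightarrow> (\<exists>cbar. \<forall>\<Lambda>. is_box \<Lambda> \<longrightarrow>
      (\<Sum>X\<in>Pow \<Lambda>. (\<Delta> X)\<^sup>2) / real (card \<Lambda>) \<le> cbar)"

end

theory Submission
  imports Defs
begin

text \<open>The free energy \<open>ln Z\<close> is a log-sum-exp of the maps \<open>J \<mapsto> -\<beta> H(\<sigma>)\<close>, which are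
linear in the couplings with coefficients \<open>\<sigma>\<^sub>X \<in> {-1, 0, 1}\<close>; so it is \<open>|\<beta>|\<close>-Lipschitz for
the \<open>\<ell>\<^sup>1\<close>-norm of \<open>J\<close>. Writing \<open>J\<^sub>X = \<Delta>\<^sub>X g\<^sub>X\<close> with independent standard Gaussians
\<open>g\<^sub>X\<close>, it is \<open>|\<beta> \<Delta>\<^sub>X|\<close>-Lipschitz in each coordinate \<open>g\<^sub>X\<close>. For such functions of a
Gaussian vector an Efron-Stein type induction over the coordinates (law of total variance,
plus \<open>Var \<phi> \<le> E (\<phi> - \<phi> 0)\<^sup>2 \<le> L\<^sup>2 E y\<^sup>2 = L\<^sup>2\<close> in one variable) gives
\<open>Var f \<le> \<Sum>\<^sub>X L\<^sub>X\<^sup>2\<close>. Hence \<open>V(A) \<le> \<beta>\<^sup>2 \<Sum>\<^sub>X \<Delta>\<^sub>X\<^sup>2 \<le> \<beta>\<^sup>2 cbar |\<Lambda>|\<close> by thermodynamic stability.\<close>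

lemma (in prob_space) variance_le_second_moment_about:
  fixes f :: "'a \<Rightarrow> real"
  assumes "integrable M f" "integrable M (\<lambda>x. (f x)\<^sup>2)"
  shows "expectation (\<lambda>x. (f x)\<^sup>2) - (expectation f)\<^sup>2 \<le> expectation (\<lambda>x. (f x - c)\<^sup>2)"
proof -
  have "(\<lambda>x. (f x - c)\<^sup>2) = (\<lambda>x. (f x)\<^sup>2 - 2 * c * f x + c\<^sup>2)"
    by (simp add: power2_diff algebra_simps)
  then have eq: "expectation (\<lambda>x. (f x - c)\<^sup>2) = expectation (\<lambda>x. (f x)\<^sup>2) - 2 * c * expectation f + c\<^sup>2"
    using assms by (simp add: prob_space)
  have "0 \<le> (expectation f - c)\<^sup>2" by simp
  then show ?thesis
    unfolding eq by (simp add: power2_diff algebra_simps)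
qed

lemma (in prob_space) square_expectation_le:
  fixes f :: "'a \<Rightarrow> real"
  assumes "integrable M f" "integrable M (\<lambda>x. (f x)\<^sup>2)"
  shows "(expectation f)\<^sup>2 \<le> expectation (\<lambda>x. (f x)\<^sup>2)"
  using variance_positive[of f] variance_eq[OF assms] by simp

lemma (in finite_measure) integrable_square_dominated:
  fixes f :: "'a \<Rightarrow> real"
  assumes "f \<in> borel_measurable M" "integrable M h" "\<And>x. x \<in> space M \<Longrightarrow> (f x)\<^sup>2 \<le> h x"
  shows "integrable M (\<lambda>x. (f x)\<^sup>2)" "integrable M f"
proof -
  show sq: "integrable M (\<lambda>x. (f x)\<^sup>2)"
    using assms by (intro Bochner_Integration.integrable_bound[OF assms(2)] AE_I2)
      (auto intro: order_trans[OF _ abs_ge_self])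
  show "integrable M f"
    by (rule square_integrable_imp_integrable[OF assms(1) sq])
qed

lemma square_add_le: "(x + y)\<^sup>2 \<le> 2 * x\<^sup>2 + 2 * (y::real)\<^sup>2"
  using zero_le_power2[of "x - y"] by (simp add: power2_sum power2_diff)

lemma prob_space_std_normal: "prob_space std_normal_distribution"
  using real_dist_normal_dist real_distribution_def by blast

lemma std_normal_second_moment:
  "integrable std_normal_distribution (\<lambda>y. y\<^sup>2)" "(\<integral>y. y\<^sup>2 \<partial>std_normal_distribution) = 1"
  using std_normal_distribution_even_moments[of 1] by auto

lemma std_normal_variance_le:
  fixes \<phi> :: "real \<Rightarrow> real"
  assumes "\<phi> \<in> borel_measurable borel" and "\<And>y. \<bar>\<phi> y - c\<bar> \<le> L * \<bar>y\<bar>"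
  shows "integrable std_normal_distribution \<phi>"
    and "integrable std_normal_distribution (\<lambda>y. (\<phi> y)\<^sup>2)"
    and "(\<integral>y. (\<phi> y)\<^sup>2 \<partial>std_normal_distribution) - (\<integral>y. \<phi> y \<partial>std_normal_distribution)\<^sup>2 \<le> L\<^sup>2"
proof -
  interpret prob_space std_normal_distribution by (rule prob_space_std_normal)
  have shifted_sq: "(\<phi> y - c)\<^sup>2 \<le> L\<^sup>2 * y\<^sup>2" for y
    using power_mono[OF assms(2)[of y] abs_ge_zero, of 2] by (simp add: power_mult_distrib)
  have "(\<phi> y)\<^sup>2 \<le> 2 * c\<^sup>2 + 2 * (L\<^sup>2 * y\<^sup>2)" for y
    using square_add_le[of c "\<phi> y - c"] shifted_sq[of y] by simp
  then show int: "integrable std_normal_distribution \<phi>"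
      and int_sq: "integrable std_normal_distribution (\<lambda>y. (\<phi> y)\<^sup>2)"
    using integrable_square_dominated[of \<phi> "\<lambda>y. 2 * c\<^sup>2 + 2 * (L\<^sup>2 * y\<^sup>2)"] assms(1)
      std_normal_second_moment(1) by auto
  have "(\<integral>y. (\<phi> y)\<^sup>2 \<partial>std_normal_distribution) - (\<integral>y. \<phi> y \<partial>std_normal_distribution)\<^sup>2
      \<le> (\<integral>y. (\<phi> y - c)\<^sup>2 \<partial>std_normal_distribution)"
    by (rule variance_le_second_moment_about[OF int int_sq])
  also have "\<dots> \<le> (\<integral>y. L\<^sup>2 * y\<^sup>2 \<partial>std_normal_distribution)"
    using int int_sq std_normal_second_moment(1) shifted_sq
    by (intro integral_mono) (auto simp: power2_diff)
  also have "\<dots> = L\<^sup>2"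
    using std_normal_second_moment(2) by simp
  finally show "(\<integral>y. (\<phi> y)\<^sup>2 \<partial>std_normal_distribution) - (\<integral>y. \<phi> y \<partial>std_normal_distribution)\<^sup>2 \<le> L\<^sup>2" .
qed

abbreviation gauss_product :: "'i set \<Rightarrow> ('i \<Rightarrow> real) measure" where
  "gauss_product I \<equiv> PiM I (\<lambda>_. std_normal_distribution)"

abbreviation gauss_variance :: "'i set \<Rightarrow> (('i \<Rightarrow> real) \<Rightarrow> real) \<Rightarrow> real" where
  "gauss_variance I f \<equiv> (\<integral>x. (f x)\<^sup>2 \<partial>gauss_product I) - (\<integral>x. f x \<partial>gauss_product I)\<^sup>2"

lemma prob_space_gauss_product: "prob_space (gauss_product I)"
  by (intro prob_space_PiM prob_space_std_normal)

lemma space_gauss_product [simp]: "space (gauss_product I) = I \<rightarrow>\<^sub>E UNIV"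
  by (simp add: space_PiM)

lemma integrable_PiM_insert_partial_integral:
  fixes f :: "('i \<Rightarrow> 'a) \<Rightarrow> real"
  assumes M: "prob_space M" and "i \<notin> I"
    and f: "integrable (PiM (insert i I) (\<lambda>_. M)) f"
  shows "integrable (PiM I (\<lambda>_. M)) (\<lambda>x. \<integral>y. f (x(i := y)) \<partial>M)"
proof -
  interpret M: prob_space M by (rule M)
  interpret PI: prob_space "PiM I (\<lambda>_. M)" by (intro prob_space_PiM M)
  interpret pair_sigma_finite M "PiM I (\<lambda>_. M)" ..
  have upd: "(\<lambda>(y, x). x(i := y)) \<in> measurable (M \<Otimes>\<^sub>M PiM I (\<lambda>_. M)) (PiM (insert i I) (\<lambda>_. M))"
    by measurable
  have "distr (M \<Otimes>\<^sub>M PiM I (\<lambda>_. M)) (PiM (insert i I) (\<lambda>_. M)) (\<lambda>(y, x). x(i := y))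
      = PiM (insert i I) (\<lambda>_. M)"
    by (rule distr_pair_PiM_eq_PiM) (auto intro: M)
  then have "integrable (M \<Otimes>\<^sub>M PiM I (\<lambda>_. M)) (\<lambda>(y, x). f (x(i := y)))"
    using integrable_distr[OF upd, of f] f by (simp add: case_prod_unfold)
  then show ?thesis
    by (rule integrable_snd)
qed

lemma gauss_product_coordinate_square_integrable:
  assumes "j \<in> I"
  shows "integrable (gauss_product I) (\<lambda>x. (x j)\<^sup>2)"
proof -
  have coord: "(\<lambda>x. x j) \<in> measurable (gauss_product I) std_normal_distribution"
    using assms by measurable
  have "distr (gauss_product I) std_normal_distribution (\<lambda>x. x j) = std_normal_distribution"
    using distr_PiM_component[of I "\<lambda>_. std_normal_distribution" j] assms prob_space_std_normal
    by auto
  then show ?thesis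
    using std_normal_second_moment(1) integrable_distr_eq[OF coord, of "\<lambda>y. y\<^sup>2"] by simp
qed

lemma gauss_product_integrable_linear_growth:
  fixes f :: "('i \<Rightarrow> real) \<Rightarrow> real"
  assumes "finite I" and f: "f \<in> borel_measurable (gauss_product I)"
    and growth: "\<And>x. x \<in> I \<rightarrow>\<^sub>E UNIV \<Longrightarrow> \<bar>f x\<bar> \<le> C + (\<Sum>j\<in>I. K j * \<bar>x j\<bar>)"
  shows "integrable (gauss_product I) f" "integrable (gauss_product I) (\<lambda>x. (f x)\<^sup>2)"
proof -
  interpret prob_space "gauss_product I" by (rule prob_space_gauss_product)
  define B where "B x = 2 * C\<^sup>2 + 2 * (real (card I) * (\<Sum>j\<in>I. (K j)\<^sup>2 * (x j)\<^sup>2))" for x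
  have "integrable (gauss_product I) B"
    unfolding B_def using gauss_product_coordinate_square_integrable
    by (intro Bochner_Integration.integrable_add Bochner_Integration.integrable_sum
        integrable_mult_right) auto
  moreover have "(f x)\<^sup>2 \<le> B x" if x: "x \<in> I \<rightarrow>\<^sub>E UNIV" for x
  proof -
    let ?S = "\<Sum>j\<in>I. K j * \<bar>x j\<bar>"
    have "(f x)\<^sup>2 \<le> (C + ?S)\<^sup>2"
      using power_mono[OF growth[OF x] abs_ge_zero, of 2] by simp
    also have "\<dots> \<le> 2 * C\<^sup>2 + 2 * ?S\<^sup>2"
      by (rule square_add_le)
    also have "?S\<^sup>2 \<le> (\<Sum>j\<in>I. (K j * \<bar>x j\<bar>)\<^sup>2) * card I"
      by (rule sum_squared_le_sum_of_squares)
    finally show ?thesis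
      by (simp add: B_def power_mult_distrib mult.commute)
  qed
  ultimately show "integrable (gauss_product I) f" "integrable (gauss_product I) (\<lambda>x. (f x)\<^sup>2)"
    using integrable_square_dominated[OF f] by auto
qed

definition coordinatewise_lipschitz :: "'i set \<Rightarrow> ('i \<Rightarrow> real) \<Rightarrow> (('i \<Rightarrow> real) \<Rightarrow> real) \<Rightarrow> bool" where
  "coordinatewise_lipschitz I L f \<longleftrightarrow>
     (\<forall>x\<in>I \<rightarrow>\<^sub>E UNIV. \<forall>j\<in>I. \<forall>y. \<bar>f (x(j := y)) - f x\<bar> \<le> L j * \<bar>y - x j\<bar>)"

lemma gauss_slice_variance_le:
  fixes f :: "('i \<Rightarrow> real) \<Rightarrow> real"
  assumes "i \<notin> I" and f: "f \<in> borel_measurable (gauss_product (insert i I))"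
    and lip: "coordinatewise_lipschitz (insert i I) L f" and x: "x \<in> I \<rightarrow>\<^sub>E UNIV"
  shows "integrable std_normal_distribution (\<lambda>y. f (x(i := y)))"
    and "integrable std_normal_distribution (\<lambda>y. (f (x(i := y)))\<^sup>2)"
    and "(\<integral>y. (f (x(i := y)))\<^sup>2 \<partial>std_normal_distribution)
           - (\<integral>y. f (x(i := y)) \<partial>std_normal_distribution)\<^sup>2 \<le> (L i)\<^sup>2"
proof -
  have meas: "(\<lambda>y. f (x(i := y))) \<in> borel_measurable borel"
    using measurable_comp[OF measurable_component_update f] x \<open>i \<notin> I\<close>
    by (simp add: comp_def fun_upd_def)
  have "x(i := 0) \<in> insert i I \<rightarrow>\<^sub>E UNIV"
    using x by (simp add: PiE_fun_upd)
  then have "\<bar>f (x(i := y)) - f (x(i := 0))\<bar> \<le> L i * \<bar>y\<bar>" for y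
    using lip unfolding coordinatewise_lipschitz_def by fastforce
  from std_normal_variance_le[OF meas this]
  show "integrable std_normal_distribution (\<lambda>y. f (x(i := y)))"
    and "integrable std_normal_distribution (\<lambda>y. (f (x(i := y)))\<^sup>2)"
    and "(\<integral>y. (f (x(i := y)))\<^sup>2 \<partial>std_normal_distribution)
           - (\<integral>y. f (x(i := y)) \<partial>std_normal_distribution)\<^sup>2 \<le> (L i)\<^sup>2"
    by simp_all
qed

lemma coordinatewise_lipschitz_partial_integral:
  fixes f :: "('i \<Rightarrow> real) \<Rightarrow> real"
  assumes "i \<notin> I" and f: "f \<in> borel_measurable (gauss_product (insert i I))"
    and lip: "coordinatewise_lipschitz (insert i I) L f"
  shows "coordinatewise_lipschitz I L (\<lambda>x. \<integral>y. f (x(i := y)) \<partial>std_normal_distribution)"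
  unfolding coordinatewise_lipschitz_def
proof (intro ballI allI)
  interpret prob_space std_normal_distribution by (rule prob_space_std_normal)
  fix x :: "'i \<Rightarrow> real" and j z assume x: "x \<in> I \<rightarrow>\<^sub>E UNIV" and j: "j \<in> I"
  have "j \<noteq> i" using j \<open>i \<notin> I\<close> by auto
  have xz: "x(j := z) \<in> I \<rightarrow>\<^sub>E UNIV"
    using PiE_fun_upd[OF _ x, of z j] j by (simp add: insert_absorb)
  have "x(i := y) \<in> insert i I \<rightarrow>\<^sub>E UNIV" for y
    using x by (simp add: PiE_fun_upd)
  then have "\<bar>f ((x(i := y))(j := z)) - f (x(i := y))\<bar> \<le> L j * \<bar>z - (x(i := y)) j\<bar>" for y
    using lip j unfolding coordinatewise_lipschitz_def by blast
  then have pointwise: "\<bar>f ((x(j := z))(i := y)) - f (x(i := y))\<bar> \<le> L j * \<bar>z - x j\<bar>" for y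
    using \<open>j \<noteq> i\<close> by (simp add: fun_upd_twist)
  note int_z = gauss_slice_variance_le(1)[OF \<open>i \<notin> I\<close> f lip xz]
  note int_x = gauss_slice_variance_le(1)[OF \<open>i \<notin> I\<close> f lip x]
  have "\<bar>expectation (\<lambda>y. f ((x(j := z))(i := y))) - expectation (\<lambda>y. f (x(i := y)))\<bar>
      = \<bar>expectation (\<lambda>y. f ((x(j := z))(i := y)) - f (x(i := y)))\<bar>"
    using int_z int_x by simp
  also have "\<dots> \<le> expectation (\<lambda>y. \<bar>f ((x(j := z))(i := y)) - f (x(i := y))\<bar>)"
    by (rule integral_abs_bound)
  also have "\<dots> \<le> expectation (\<lambda>y. L j * \<bar>z - x j\<bar>)"
    using int_z int_x pointwise by (intro integral_mono) auto
  also have "\<dots> = L j * \<bar>z - x j\<bar>"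
    using prob_space by simp
  finally show "\<bar>expectation (\<lambda>y. f ((x(j := z))(i := y))) - expectation (\<lambda>y. f (x(i := y)))\<bar>
      \<le> L j * \<bar>z - x j\<bar>" .
qed

lemma gauss_variance_insert_le:
  fixes f :: "('i \<Rightarrow> real) \<Rightarrow> real" and i :: "'i"
  defines "h \<equiv> \<lambda>x. \<integral>y. f (x(i := y)) \<partial>std_normal_distribution"
  assumes "finite I" "i \<notin> I"
    and f: "integrable (gauss_product (insert i I)) f"
    and f_sq: "integrable (gauss_product (insert i I)) (\<lambda>x. (f x)\<^sup>2)"
    and lip: "coordinatewise_lipschitz (insert i I) L f"
  shows "integrable (gauss_product I) h"
    and "integrable (gauss_product I) (\<lambda>x. (h x)\<^sup>2)"
    and "gauss_variance (insert i I) f \<le> gauss_variance I h + (L i)\<^sup>2"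
proof -
  interpret product_sigma_finite "\<lambda>_::'i. std_normal_distribution"
    by (simp add: product_sigma_finite_def prob_space_imp_sigma_finite prob_space_std_normal)
  interpret P: prob_space "gauss_product I" by (rule prob_space_gauss_product)
  define q where "q x = (\<integral>y. (f (x(i := y)))\<^sup>2 \<partial>std_normal_distribution)" for x
  have f_meas: "f \<in> borel_measurable (gauss_product (insert i I))"
    using f by auto
  note slice = gauss_slice_variance_le[OF \<open>i \<notin> I\<close> f_meas lip]
  show h_int: "integrable (gauss_product I) h"
    unfolding h_def by (rule integrable_PiM_insert_partial_integral[OF prob_space_std_normal \<open>i \<notin> I\<close> f])
  have q_int: "integrable (gauss_product I) q"
    unfolding q_def using integrable_PiM_insert_partial_integral[OF prob_space_std_normal \<open>i \<notin> I\<close> f_sq] .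
  have slice_var: "q x - (h x)\<^sup>2 \<le> (L i)\<^sup>2" if "x \<in> I \<rightarrow>\<^sub>E UNIV" for x
    unfolding h_def q_def using slice(3)[OF that] .
  have "(h x)\<^sup>2 \<le> q x" if "x \<in> I \<rightarrow>\<^sub>E UNIV" for x
    unfolding h_def q_def using prob_space.square_expectation_le[OF prob_space_std_normal]
      slice(1,2)[OF that] .
  then show h_sq_int: "integrable (gauss_product I) (\<lambda>x. (h x)\<^sup>2)"
    using P.integrable_square_dominated(1)[OF _ q_int] h_int by auto
  have mean: "(\<integral>x. f x \<partial>gauss_product (insert i I)) = (\<integral>x. h x \<partial>gauss_product I)"
    unfolding h_def by (rule product_integral_insert[OF \<open>finite I\<close> \<open>i \<notin> I\<close> f])
  have second_moment: "(\<integral>x. (f x)\<^sup>2 \<partial>gauss_product (insert i I)) = (\<integral>x. q x \<partial>gauss_product I)"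
    unfolding q_def by (rule product_integral_insert[OF \<open>finite I\<close> \<open>i \<notin> I\<close> f_sq])
  \<comment> \<open>Law of total variance: \<open>q x - (h x)\<^sup>2\<close> is the variance of \<open>f\<close> along the \<open>i\<close>-th
      coordinate line through \<open>x\<close>.\<close>
  have "gauss_variance (insert i I) f = gauss_variance I h + (\<integral>x. q x - (h x)\<^sup>2 \<partial>gauss_product I)"
    unfolding mean second_moment using q_int h_sq_int by simp
  also have "\<dots> \<le> gauss_variance I h + (\<integral>x. (L i)\<^sup>2 \<partial>gauss_product I)"
    using q_int h_sq_int slice_var by (intro add_left_mono integral_mono) auto
  finally show "gauss_variance (insert i I) f \<le> gauss_variance I h + (L i)\<^sup>2"
    using P.prob_space by simp
qed

theorem gauss_variance_le_sum_lipschitz: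
  fixes f :: "('i \<Rightarrow> real) \<Rightarrow> real"
  assumes "finite I"
    and "integrable (gauss_product I) f" "integrable (gauss_product I) (\<lambda>x. (f x)\<^sup>2)"
    and "coordinatewise_lipschitz I L f"
  shows "gauss_variance I f \<le> (\<Sum>j\<in>I. (L j)\<^sup>2)"
  using assms
proof (induction I arbitrary: f rule: finite_induct)
  case empty
  then show ?case
    by (simp add: PiM_empty lebesgue_integral_count_space_finite)
next
  case (insert i I)
  define h where "h x = (\<integral>y. f (x(i := y)) \<partial>std_normal_distribution)" for x
  note step = gauss_variance_insert_le[OF insert.hyps insert.prems, folded h_def]
  have "coordinatewise_lipschitz I L h"
    unfolding h_def using insert.prems insert.hyps
    by (intro coordinatewise_lipschitz_partial_integral) auto
  then have "gauss_variance I h \<le> (\<Sum>j\<in>I. (L j)\<^sup>2)"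
    using insert.IH step(1,2) by blast
  then show ?case
    using step(3) insert.hyps by simp
qed

lemma ln_sum_exp_lipschitz:
  fixes a b :: "'s \<Rightarrow> real"
  assumes "finite S" "S \<noteq> {}" and close: "\<And>s. s \<in> S \<Longrightarrow> \<bar>a s - b s\<bar> \<le> D"
  shows "\<bar>ln (\<Sum>s\<in>S. exp (a s)) - ln (\<Sum>s\<in>S. exp (b s))\<bar> \<le> D"
proof -
  have one_sided: "ln (\<Sum>s\<in>S. exp (u s)) \<le> D + ln (\<Sum>s\<in>S. exp (v s))"
    if "\<And>s. s \<in> S \<Longrightarrow> u s \<le> D + v s" for u v :: "'s \<Rightarrow> real"
  proof -
    have pos: "(\<Sum>s\<in>S. exp (u s)) > 0" "(\<Sum>s\<in>S. exp (v s)) > 0"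
      using assms(1,2) by (auto intro!: sum_pos)
    have "(\<Sum>s\<in>S. exp (u s)) \<le> (\<Sum>s\<in>S. exp D * exp (v s))"
      using that by (intro sum_mono) (simp flip: exp_add)
    also have "\<dots> = exp D * (\<Sum>s\<in>S. exp (v s))"
      by (simp add: sum_distrib_left)
    finally have "ln (\<Sum>s\<in>S. exp (u s)) \<le> ln (exp D * (\<Sum>s\<in>S. exp (v s)))"
      using pos by simp
    also have "\<dots> = D + ln (\<Sum>s\<in>S. exp (v s))"
      using pos by (simp add: ln_mult)
    finally show ?thesis .
  qed
  have "ln (\<Sum>s\<in>S. exp (a s)) \<le> D + ln (\<Sum>s\<in>S. exp (b s))"
    using close by (intro one_sided) (fastforce simp: abs_le_iff)
  moreover have "ln (\<Sum>s\<in>S. exp (b s)) \<le> D + ln (\<Sum>s\<in>S. exp (a s))"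
    using close by (intro one_sided) (fastforce simp: abs_le_iff)
  ultimately show ?thesis
    by linarith
qed

lemma finite_configs: "finite \<Lambda> \<Longrightarrow> finite (configs \<Lambda>)"
  unfolding configs_def by (auto intro: finite_PiE)

lemma configs_nonempty: "configs \<Lambda> \<noteq> {}"
  unfolding configs_def by (simp add: PiE_eq_empty_iff)

lemma abs_sigma_prod_le:
  assumes "\<sigma> \<in> configs \<Lambda>" "X \<subseteq> \<Lambda>"
  shows "\<bar>sigma_prod \<sigma> X\<bar> \<le> 1"
proof -
  have "\<bar>\<sigma> i\<bar> = 1" if "i \<in> X" for i
    using assms that unfolding configs_def by (auto dest: PiE_mem)
  then show ?thesis
    by (simp add: sigma_prod_def abs_prod)
qed

lemma free_energy_lipschitz:
  assumes "finite \<Lambda>"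
  shows "\<bar>free_energy \<Lambda> \<beta> J - free_energy \<Lambda> \<beta> J'\<bar> \<le> \<bar>\<beta>\<bar> * (\<Sum>X\<in>Pow \<Lambda>. \<bar>J X - J' X\<bar>)"
  unfolding free_energy_def partition_fn_def
proof (rule ln_sum_exp_lipschitz[OF finite_configs[OF assms] configs_nonempty])
  fix \<sigma> assume \<sigma>: "\<sigma> \<in> configs \<Lambda>"
  have "- \<beta> * hamiltonian \<Lambda> J \<sigma> - - \<beta> * hamiltonian \<Lambda> J' \<sigma>
      = \<beta> * (\<Sum>X\<in>Pow \<Lambda>. (J X - J' X) * sigma_prod \<sigma> X)"
    by (simp add: hamiltonian_def sum_subtractf left_diff_distrib right_diff_distrib)
  then have "\<bar>- \<beta> * hamiltonian \<Lambda> J \<sigma> - - \<beta> * hamiltonian \<Lambda> J' \<sigma>\<bar>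
      = \<bar>\<beta>\<bar> * \<bar>\<Sum>X\<in>Pow \<Lambda>. (J X - J' X) * sigma_prod \<sigma> X\<bar>"
    by (simp add: abs_mult)
  also have "\<dots> \<le> \<bar>\<beta>\<bar> * (\<Sum>X\<in>Pow \<Lambda>. \<bar>J X - J' X\<bar>)"
  proof (intro mult_left_mono order_trans[OF sum_abs] sum_mono)
    fix X assume "X \<in> Pow \<Lambda>"
    then show "\<bar>(J X - J' X) * sigma_prod \<sigma> X\<bar> \<le> \<bar>J X - J' X\<bar>"
      using abs_sigma_prod_le[OF \<sigma>] by (simp add: abs_mult mult_left_le)
  qed simp
  finally show "\<bar>- \<beta> * hamiltonian \<Lambda> J \<sigma> - - \<beta> * hamiltonian \<Lambda> J' \<sigma>\<bar>
      \<le> \<bar>\<beta>\<bar> * (\<Sum>X\<in>Pow \<Lambda>. \<bar>J X - J' X\<bar>)" .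
qed

lemma free_energy_measurable:
  "(\<lambda>g. free_energy \<Lambda> \<beta> (\<lambda>X. \<Delta> X * g X)) \<in> borel_measurable (gauss_product (Pow \<Lambda>))"
  unfolding free_energy_def partition_fn_def hamiltonian_def by measurable

lemma Var_Av_free_energy_le:
  fixes \<Lambda> :: "'a set"
  assumes "finite \<Lambda>"
  shows "Var_Av \<Lambda> \<Delta> (free_energy \<Lambda> \<beta>) \<le> \<beta>\<^sup>2 * (\<Sum>X\<in>Pow \<Lambda>. (\<Delta> X)\<^sup>2)"
proof -
  define F where "F g = free_energy \<Lambda> \<beta> (\<lambda>X. \<Delta> X * g X)" for g :: "'a set \<Rightarrow> real"
  have dist: "\<bar>F g - F g'\<bar> \<le> (\<Sum>X\<in>Pow \<Lambda>. \<bar>\<beta>\<bar> * \<bar>\<Delta> X\<bar> * \<bar>g X - g' X\<bar>)" for g g'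
    using free_energy_lipschitz[OF assms, of \<beta> "\<lambda>X. \<Delta> X * g X" "\<lambda>X. \<Delta> X * g' X"]
    by (simp add: F_def sum_distrib_left mult.assoc abs_mult flip: right_diff_distrib)
  have lip: "coordinatewise_lipschitz (Pow \<Lambda>) (\<lambda>X. \<bar>\<beta>\<bar> * \<bar>\<Delta> X\<bar>) F"
    unfolding coordinatewise_lipschitz_def
  proof (intro ballI allI)
    fix g X y assume "X \<in> Pow \<Lambda>"
    then have "(\<Sum>Y\<in>Pow \<Lambda>. \<bar>\<beta>\<bar> * \<bar>\<Delta> Y\<bar> * \<bar>(g(X := y)) Y - g Y\<bar>) = \<bar>\<beta>\<bar> * \<bar>\<Delta> X\<bar> * \<bar>y - g X\<bar>"
      using assms by (subst sum.remove[of _ X]) auto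
    then show "\<bar>F (g(X := y)) - F g\<bar> \<le> \<bar>\<beta>\<bar> * \<bar>\<Delta> X\<bar> * \<bar>y - g X\<bar>"
      using dist[of "g(X := y)" g] by simp
  qed
  have growth: "\<bar>F g\<bar> \<le> \<bar>F (\<lambda>_. 0)\<bar> + (\<Sum>X\<in>Pow \<Lambda>. \<bar>\<beta>\<bar> * \<bar>\<Delta> X\<bar> * \<bar>g X\<bar>)" for g
    using dist[of g "\<lambda>_. 0"] by simp
  have "F \<in> borel_measurable (gauss_product (Pow \<Lambda>))"
    unfolding F_def by (rule free_energy_measurable)
  note integrable = gauss_product_integrable_linear_growth[OF _ this growth]
  have "gauss_variance (Pow \<Lambda>) F \<le> (\<Sum>X\<in>Pow \<Lambda>. (\<bar>\<beta>\<bar> * \<bar>\<Delta> X\<bar>)\<^sup>2)"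
    using assms by (intro gauss_variance_le_sum_lipschitz integrable lip) auto
  then show ?thesis
    by (simp add: Var_Av_def Av_def gauss_space_def F_def power_mult_distrib sum_distrib_left)
qed

lemma is_box_finite_nonempty:
  fixes \<Lambda> :: "(int ^ 'd::finite) set"
  assumes "is_box \<Lambda>"
  shows "finite \<Lambda>" "\<Lambda> \<noteq> {}"
proof -
  obtain a b where ab: "\<forall>i. a $ i \<le> b $ i" "\<Lambda> = box_Zd a b"
    using assms unfolding is_box_def by blast
  have "\<Lambda> \<subseteq> vec_lambda ` (PiE UNIV (\<lambda>i. {a $ i..b $ i}))"
  proof
    fix x assume "x \<in> \<Lambda>"
    then have "(\<lambda>i. x $ i) \<in> PiE UNIV (\<lambda>i. {a $ i..b $ i})"
      using ab by (auto simp: box_Zd_def)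
    then show "x \<in> vec_lambda ` (PiE UNIV (\<lambda>i. {a $ i..b $ i}))"
      by (metis image_eqI vec_lambda_eta)
  qed
  then show "finite \<Lambda>"
    by (rule finite_subset) (intro finite_imageI finite_PiE; simp)
  have "a \<in> \<Lambda>"
    using ab by (auto simp: box_Zd_def)
  then show "\<Lambda> \<noteq> {}" by auto
qed

lemma thermo_stable_sum_le:
  fixes \<Delta> :: "(int ^ 'd::finite) set \<Rightarrow> real"
  assumes "thermo_stable \<Delta>"
  obtains C where "C > 0" "\<And>\<Lambda>. is_box \<Lambda> \<Longrightarrow> (\<Sum>X\<in>Pow \<Lambda>. (\<Delta> X)\<^sup>2) \<le> C * real (card \<Lambda>)"
proof -
  obtain cbar where cbar: "\<And>\<Lambda>. is_box \<Lambda> \<Longrightarrow> (\<Sum>X\<in>Pow \<Lambda>. (\<Delta> X)\<^sup>2) / real (card \<Lambda>) \<le> cbar"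
    using assms unfolding thermo_stable_def by blast
  have "(\<Sum>X\<in>Pow \<Lambda>. (\<Delta> X)\<^sup>2) \<le> max 1 cbar * real (card \<Lambda>)" if box: "is_box \<Lambda>" for \<Lambda>
  proof -
    have card_pos: "real (card \<Lambda>) > 0"
      using is_box_finite_nonempty[OF box] by (simp add: card_gt_0_iff)
    then have "(\<Sum>X\<in>Pow \<Lambda>. (\<Delta> X)\<^sup>2) \<le> cbar * real (card \<Lambda>)"
      using cbar[OF box] by (simp add: pos_divide_le_eq)
    also have "\<dots> \<le> max 1 cbar * real (card \<Lambda>)"
      using card_pos by (intro mult_right_mono) simp_all
    finally show ?thesis .
  qed
  then show thesis
    using that[of "max 1 cbar"] by simp
qed

theorem lemma3:
  fixes \<Delta> :: "(int ^ 'd::finite) set \<Rightarrow> real"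
  assumes "transl_inv \<Delta>"
    and "thermo_stable \<Delta>"
  shows "\<exists>c :: real \<Rightarrow> real. (\<forall>\<beta>>0. c \<beta> > 0) \<and>
           (\<forall>\<beta>>0. \<forall>\<Lambda>. is_box \<Lambda> \<longrightarrow>
              Var_Av \<Lambda> \<Delta> (free_energy \<Lambda> \<beta>) \<le> c \<beta> * real (card \<Lambda>))"
proof -
  obtain C where "C > 0" and C: "\<And>\<Lambda>. is_box \<Lambda> \<Longrightarrow> (\<Sum>X\<in>Pow \<Lambda>. (\<Delta> X)\<^sup>2) \<le> C * real (card \<Lambda>)"
    using thermo_stable_sum_le[OF assms(2)] by blast
  have "Var_Av \<Lambda> \<Delta> (free_energy \<Lambda> \<beta>) \<le> \<beta>\<^sup>2 * C * real (card \<Lambda>)" if box: "is_box \<Lambda>" for \<beta> \<Lambda>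
  proof -
    have "Var_Av \<Lambda> \<Delta> (free_energy \<Lambda> \<beta>) \<le> \<beta>\<^sup>2 * (\<Sum>X\<in>Pow \<Lambda>. (\<Delta> X)\<^sup>2)"
      using is_box_finite_nonempty(1)[OF box] by (rule Var_Av_free_energy_le)
    also have "\<dots> \<le> \<beta>\<^sup>2 * (C * real (card \<Lambda>))"
      using C[OF box] by (rule mult_left_mono) simp
    finally show ?thesis
      by (simp only: mult.assoc)
  qed
  then show ?thesis
    using \<open>C > 0\<close> by (intro exI[of _ "\<lambda>\<beta>. \<beta>\<^sup>2 * C"]) simp
qed

end
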